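(* Every ideal $J$ of $\widetilde{\mathbb{R}}_{sm}$ is absolutely convex: if $x\in J$ and $y\in\widetilde{\mathbb{R}}_{sm}$ with $|y|\le|x|$, then $y\in J$.
   Context: Let $I=(0,1]$. $\widetilde{\mathbb{R}}_{sm}=\mathcal{E}_{M,sm}/\mathcal{N}_{sm}$ where $\mathcal{E}_{M,sm}$ is the set of smooth nets $(r_\varepsilon)_{\varepsilon\in I}\in\mathbb{R}^I$ with $|r_\varepsilon|=O(\varepsilon^{-N})$ for some $N$, and $\mathcal{N}_{sm}$ those with $|r_\varepsilon|=O(\varepsilon^m)$ for all $m$. The natural map $\tau_{sm}$ from $\widetilde{\mathbb{R}}_{sm}$ to the analogous ring $\widetilde{\mathbb{R}}_{co}$ of continuously parametrized nets is a ring isomorphism. Order: $r\le s$ iff there are representatives with $r_\varepsilon\le s_\varepsilon$ for all $\varepsilon$. Absolute value: $|x|=\tau_{sm}^{-1}([(|x_\varepsilon|)_\varepsilon])$. *)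

theory Defs
  imports Complex_Main "HOL-Algebra.Ideal"
begin

text \<open>Parameter interval I = (0,1]. Nets are functions real => real; only their
  values on I matter.\<close>

definition Iset :: "real set" where "Iset = {0<..1}"

definition smooth_net :: "(real \<Rightarrow> real) \<Rightarrow> bool" where
  "smooth_net r \<longleftrightarrow> (\<exists>D :: nat \<Rightarrow> real \<Rightarrow> real.
      (\<forall>e\<in>Iset. D 0 e = r e) \<and>
      (\<forall>n. \<forall>e\<in>Iset. (D n has_real_derivative D (Suc n) e) (at e within Iset)))"

definition moderate :: "(real \<Rightarrow> real) \<Rightarrow> bool" where
  "moderate r \<longleftrightarrow> (\<exists>N::nat. \<exists>C \<eta>. 0 < \<eta> \<and>
      (\<forall>e. 0 < e \<and> e < \<eta> \<and> e \<le> 1 \<longrightarrow> \<bar>r e\<bar> \<le> C / e ^ N))"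

definition negligible :: "(real \<Rightarrow> real) \<Rightarrow> bool" where
  "negligible r \<longleftrightarrow> (\<forall>m::nat. \<exists>C \<eta>. 0 < \<eta> \<and>
      (\<forall>e. 0 < e \<and> e < \<eta> \<and> e \<le> 1 \<longrightarrow> \<bar>r e\<bar> \<le> C * e ^ m))"

definition EM_sm :: "(real \<Rightarrow> real) set" where
  "EM_sm = {r. smooth_net r \<and> moderate r}"

definition EM_co :: "(real \<Rightarrow> real) set" where
  "EM_co = {r. continuous_on Iset r \<and> moderate r}"

definition cls_sm :: "(real \<Rightarrow> real) \<Rightarrow> (real \<Rightarrow> real) set" where
  "cls_sm r = {s \<in> EM_sm. negligible (\<lambda>e. r e - s e)}"

definition cls_co :: "(real \<Rightarrow> real) \<Rightarrow> (real \<Rightarrow> real) set" where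
  "cls_co r = {s \<in> EM_co. negligible (\<lambda>e. r e - s e)}"

definition Rsm :: "(real \<Rightarrow> real) set set" where
  "Rsm = cls_sm ` EM_sm"

definition rep :: "(real \<Rightarrow> real) set \<Rightarrow> real \<Rightarrow> real" where
  "rep X = (SOME r. r \<in> X)"

definition Rsm_ring :: "(real \<Rightarrow> real) set ring" where
  "Rsm_ring = \<lparr>carrier = Rsm,
      monoid.mult = (\<lambda>X Y. cls_sm (\<lambda>e. rep X e * rep Y e)),
      one = cls_sm (\<lambda>_. 1),
      zero = cls_sm (\<lambda>_. 0),
      add = (\<lambda>X Y. cls_sm (\<lambda>e. rep X e + rep Y e))\<rparr>"

definition tau_sm :: "(real \<Rightarrow> real) set \<Rightarrow> (real \<Rightarrow> real) set" where
  "tau_sm X = cls_co (rep X)"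

definition le_sm :: "(real \<Rightarrow> real) set \<Rightarrow> (real \<Rightarrow> real) set \<Rightarrow> bool" where
  "le_sm X Y \<longleftrightarrow> (\<exists>r\<in>X. \<exists>s\<in>Y. \<forall>e\<in>Iset. r e \<le> s e)"

definition abs_sm :: "(real \<Rightarrow> real) set \<Rightarrow> (real \<Rightarrow> real) set" where
  "abs_sm X = (THE Y. Y \<in> Rsm \<and> tau_sm Y = cls_co (\<lambda>e. \<bar>rep X e\<bar>))"

end

theory Submission
  imports Defs "HOL-Library.Landau_Symbols"
begin

text \<open>If \<open>|y| \<le> |x|\<close> with representatives \<open>b\<close> of \<open>y\<close> and \<open>a\<close> of \<open>x\<close>, then
  \<open>|b| \<le> |a| + t\<close> on \<open>I\<close> for some smooth, positive, negligible net \<open>t\<close>. The smooth net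
  \<open>z = b a / (a\<^sup>2 + t\<^sup>2)\<close> is then bounded by \<open>3/2\<close> and \<open>z a - b\<close> is bounded by
  \<open>3 t / 2\<close>, so \<open>y = [z] x\<close> is a multiple of \<open>x\<close> and lies in every ideal containing \<open>x\<close>.\<close>

lemma eventually_at_right_0_iff:
  "eventually P (at_right (0::real)) \<longleftrightarrow> (\<exists>\<eta>>0. \<forall>e. 0 < e \<and> e < \<eta> \<and> e \<le> 1 \<longrightarrow> P e)"
proof
  assume "eventually P (at_right 0)"
  then obtain \<eta> where "\<eta> > 0" "\<And>e. 0 < e \<Longrightarrow> e < \<eta> \<Longrightarrow> P e"
    unfolding eventually_at_right_field by auto
  then show "\<exists>\<eta>>0. \<forall>e. 0 < e \<and> e < \<eta> \<and> e \<le> 1 \<longrightarrow> P e" by blast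
next
  assume "\<exists>\<eta>>0. \<forall>e. 0 < e \<and> e < \<eta> \<and> e \<le> 1 \<longrightarrow> P e"
  then obtain \<eta> where "\<eta> > 0" "\<And>e. 0 < e \<Longrightarrow> e < \<eta> \<Longrightarrow> e \<le> 1 \<Longrightarrow> P e" by blast
  then show "eventually P (at_right 0)"
    unfolding eventually_at_right_field by (intro exI[of _ "min \<eta> 1"]) auto
qed

lemma bigo_iff_eventually_le:
  fixes f g :: "'a \<Rightarrow> real"
  assumes "\<forall>\<^sub>F x in F. 0 \<le> g x"
  shows "f \<in> O[F](g) \<longleftrightarrow> (\<exists>C. \<forall>\<^sub>F x in F. \<bar>f x\<bar> \<le> C * g x)"
proof
  assume "f \<in> O[F](g)"
  then obtain C where "\<forall>\<^sub>F x in F. \<bar>f x\<bar> \<le> C * \<bar>g x\<bar>"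
    by (auto elim: landau_o.bigE)
  with assms have "\<forall>\<^sub>F x in F. \<bar>f x\<bar> \<le> C * g x"
    by eventually_elim simp
  then show "\<exists>C. \<forall>\<^sub>F x in F. \<bar>f x\<bar> \<le> C * g x" ..
next
  assume "\<exists>C. \<forall>\<^sub>F x in F. \<bar>f x\<bar> \<le> C * g x"
  then obtain C where "\<forall>\<^sub>F x in F. \<bar>f x\<bar> \<le> C * g x" ..
  with assms have "\<forall>\<^sub>F x in F. norm (f x) \<le> C * norm (g x)"
    by eventually_elim simp
  then show "f \<in> O[F](g)" ..
qed

lemma eventually_at_right_0_nonneg: "\<forall>\<^sub>F e in at_right (0::real). 0 \<le> e"
  using eventually_at_right_less[of "0::real"] by eventually_elim simp

lemma negligible_iff_bigo: "negligible f \<longleftrightarrow> (\<forall>m. f \<in> O[at_right 0](\<lambda>e. e ^ m))"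
proof -
  have "\<forall>\<^sub>F e in at_right 0. 0 \<le> (e::real) ^ m" for m
    using eventually_at_right_0_nonneg by eventually_elim simp
  then show ?thesis
    by (simp add: negligible_def bigo_iff_eventually_le eventually_at_right_0_iff)
qed

lemma moderate_iff_bigo: "moderate f \<longleftrightarrow> (\<exists>N. f \<in> O[at_right 0](\<lambda>e. 1 / e ^ N))"
proof -
  have "\<forall>\<^sub>F e in at_right 0. 0 \<le> 1 / (e::real) ^ N" for N
    using eventually_at_right_0_nonneg by eventually_elim simp
  then show ?thesis
    by (simp add: moderate_def bigo_iff_eventually_le eventually_at_right_0_iff)
qed

lemma eventually_at_right_0_if_Iset:
  assumes "\<And>e. e \<in> Iset \<Longrightarrow> P e"
  shows "\<forall>\<^sub>F e in at_right 0. P e"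
  unfolding eventually_at_right_0_iff using assms by (auto simp: Iset_def intro: exI[of _ 1])

lemma negligible_add: "negligible f \<Longrightarrow> negligible g \<Longrightarrow> negligible (\<lambda>e. f e + g e)"
  by (simp add: negligible_iff_bigo sum_in_bigo)

lemma negligible_cmult: "negligible f \<Longrightarrow> negligible (\<lambda>e. c * f e)"
  by (simp add: negligible_iff_bigo)

lemma negligible_zero: "negligible (\<lambda>_. 0)"
  by (simp add: negligible_iff_bigo)

lemma negligible_dominated:
  assumes "negligible f" and "\<And>e. e \<in> Iset \<Longrightarrow> \<bar>g e\<bar> \<le> \<bar>f e\<bar>"
  shows "negligible g"
proof -
  have "g \<in> O[at_right 0](f)"
    by (intro bigoI[of _ 1] eventually_at_right_0_if_Iset) (simp add: assms(2))
  with assms(1) show ?thesis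
    unfolding negligible_iff_bigo by (blast intro: landau_o.big_trans)
qed

lemma negligible_mult_moderate:
  assumes "moderate f" and "negligible g"
  shows "negligible (\<lambda>e. f e * g e)"
  unfolding negligible_iff_bigo
proof
  fix m
  obtain N where "f \<in> O[at_right 0](\<lambda>e. 1 / e ^ N)"
    using assms(1) by (auto simp: moderate_iff_bigo)
  moreover have "g \<in> O[at_right 0](\<lambda>e. e ^ (m + N))"
    using assms(2) by (simp add: negligible_iff_bigo)
  ultimately have "(\<lambda>e. f e * g e) \<in> O[at_right 0](\<lambda>e. 1 / e ^ N * e ^ (m + N))"
    by (rule landau_o.big.mult)
  moreover have "\<forall>\<^sub>F e in at_right 0. 1 / e ^ N * e ^ (m + N) = (e::real) ^ m"
    using eventually_at_right_less[of "0::real"] by eventually_elim (simp add: power_add)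
  ultimately show "(\<lambda>e. f e * g e) \<in> O[at_right 0](\<lambda>e. e ^ m)"
    by (simp add: landau_o.big.cong)
qed

lemma negligible_sqrt_abs:
  assumes "negligible f"
  shows "negligible (\<lambda>e. sqrt \<bar>f e\<bar>)"
  unfolding negligible_def
proof
  fix m :: nat
  obtain C \<eta> where "0 < \<eta>" and C: "\<forall>e. 0 < e \<and> e < \<eta> \<and> e \<le> 1 \<longrightarrow> \<bar>f e\<bar> \<le> C * e ^ (2 * m)"
    using assms unfolding negligible_def by blast
  have "\<bar>sqrt \<bar>f e\<bar>\<bar> \<le> sqrt \<bar>C\<bar> * e ^ m" if "0 < e" "\<bar>f e\<bar> \<le> C * e ^ (2 * m)" for e
  proof -
    have "(e ^ m)\<^sup>2 = e ^ (2 * m)"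
      by (simp add: power_mult[symmetric] mult.commute)
    then have "\<bar>f e\<bar> \<le> \<bar>C\<bar> * (e ^ m)\<^sup>2"
      using that by (simp add: order_trans[OF _ mult_right_mono])
    then have "sqrt \<bar>f e\<bar> \<le> sqrt (\<bar>C\<bar> * (e ^ m)\<^sup>2)" by (rule real_sqrt_le_mono)
    with \<open>0 < e\<close> show ?thesis by (simp add: real_sqrt_mult)
  qed
  with \<open>0 < \<eta>\<close> C show "\<exists>C \<eta>. 0 < \<eta> \<and> (\<forall>e. 0 < e \<and> e < \<eta> \<and> e \<le> 1 \<longrightarrow> \<bar>sqrt \<bar>f e\<bar>\<bar> \<le> C * e ^ m)"
    by blast
qed

lemma negligible_imp_moderate: "negligible f \<Longrightarrow> moderate f"
proof -
  assume "negligible f"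
  then have "f \<in> O[at_right 0](\<lambda>e. e ^ 0)" unfolding negligible_iff_bigo ..
  then show "moderate f" unfolding moderate_iff_bigo by (intro exI[of _ 0]) simp
qed

lemma moderate_const: "moderate (\<lambda>_. c)"
  unfolding moderate_iff_bigo by (intro exI[of _ 0]) simp

lemma moderate_dominated:
  assumes "moderate f" and "\<And>e. e \<in> Iset \<Longrightarrow> \<bar>g e\<bar> \<le> \<bar>f e\<bar>"
  shows "moderate g"
proof -
  have "g \<in> O[at_right 0](f)"
    by (intro bigoI[of _ 1] eventually_at_right_0_if_Iset) (simp add: assms(2))
  with assms(1) show ?thesis
    unfolding moderate_iff_bigo by (blast intro: landau_o.big_trans)
qed

lemma inverse_power_bigo_mono:
  assumes "N \<le> M"
  shows "(\<lambda>e::real. 1 / e ^ N) \<in> O[at_right 0](\<lambda>e. 1 / e ^ M)"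
  using assms
  by (intro bigoI[of _ 1] eventually_at_right_0_if_Iset)
    (auto simp: Iset_def intro!: divide_left_mono power_decreasing)

lemma moderate_add:
  assumes "moderate f" and "moderate g"
  shows "moderate (\<lambda>e. f e + g e)"
proof -
  obtain N M where f: "f \<in> O[at_right 0](\<lambda>e. 1 / e ^ N)" and g: "g \<in> O[at_right 0](\<lambda>e. 1 / e ^ M)"
    using assms by (auto simp: moderate_iff_bigo)
  have "f \<in> O[at_right 0](\<lambda>e. 1 / e ^ (N + M))"
    by (rule landau_o.big_trans[OF f inverse_power_bigo_mono]) simp
  moreover have "g \<in> O[at_right 0](\<lambda>e. 1 / e ^ (N + M))"
    by (rule landau_o.big_trans[OF g inverse_power_bigo_mono]) simp
  ultimately show ?thesis
    unfolding moderate_iff_bigo by (blast intro: sum_in_bigo)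
qed

lemma smooth_net_cong:
  assumes "smooth_net f" and "\<And>e. e \<in> Iset \<Longrightarrow> f e = g e"
  shows "smooth_net g"
  using assms unfolding smooth_net_def by auto

lemma smooth_net_coinduct:
  assumes "\<And>g. g \<in> T \<Longrightarrow> \<exists>g'\<in>T. \<forall>e\<in>Iset. (g has_real_derivative g' e) (at e within Iset)"
    and "f \<in> T"
  shows "smooth_net f"
proof -
  from assms(1) have step: "\<forall>g\<in>T. \<exists>g'. g' \<in> T \<and> (\<forall>e\<in>Iset. (g has_real_derivative g' e) (at e within Iset))"
    by blast
  obtain d where d: "\<forall>g\<in>T. d g \<in> T \<and> (\<forall>e\<in>Iset. (g has_real_derivative d g e) (at e within Iset))"
    using bchoice[OF step] by blast
  define D where "D n = (d ^^ n) f" for n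
  have "D n \<in> T" for n
    by (induction n) (simp_all add: D_def \<open>f \<in> T\<close> d)
  then have "\<forall>n. \<forall>e\<in>Iset. (D n has_real_derivative D (Suc n) e) (at e within Iset)"
    using d by (simp add: D_def)
  then show ?thesis
    unfolding smooth_net_def by (intro exI[of _ D]) (simp add: D_def)
qed

lemma smooth_net_has_smooth_derivative:
  assumes "smooth_net f"
  shows "\<exists>f'. smooth_net f' \<and> (\<forall>e\<in>Iset. (f has_real_derivative f' e) (at e within Iset))"
proof -
  obtain D where D0: "\<forall>e\<in>Iset. D 0 e = f e"
    and DS: "\<forall>n. \<forall>e\<in>Iset. (D n has_real_derivative D (Suc n) e) (at e within Iset)"
    using assms unfolding smooth_net_def by blast
  have "smooth_net (D 1)"
    unfolding smooth_net_def using DS by (intro exI[of _ "\<lambda>n. D (Suc n)"]) auto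
  moreover have "(f has_real_derivative D 1 e) (at e within Iset)" if "e \<in> Iset" for e
    by (rule has_field_derivative_transform_within[of "D 0" _ _ _ 1]) (use DS D0 that in auto)
  ultimately show ?thesis by blast
qed

text \<open>The product rule needs derivatives of both factors in the same set, so closure properties
  of smooth nets are obtained for whole generated algebras at once.\<close>

inductive_set generated_algebra :: "(real \<Rightarrow> real) set \<Rightarrow> (real \<Rightarrow> real) set" for B where
  base: "f \<in> B \<Longrightarrow> f \<in> generated_algebra B"
| const: "(\<lambda>_. c) \<in> generated_algebra B"
| add: "f \<in> generated_algebra B \<Longrightarrow> g \<in> generated_algebra B \<Longrightarrow>
    (\<lambda>e. f e + g e) \<in> generated_algebra B"
| mult: "f \<in> generated_algebra B \<Longrightarrow> g \<in> generated_algebra B \<Longrightarrow>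
    (\<lambda>e. f e * g e) \<in> generated_algebra B"

lemma smooth_net_generated_algebra:
  assumes "\<And>f. f \<in> B \<Longrightarrow>
      \<exists>f'\<in>generated_algebra B. \<forall>e\<in>Iset. (f has_real_derivative f' e) (at e within Iset)"
    and "h \<in> generated_algebra B"
  shows "smooth_net h"
proof (rule smooth_net_coinduct[OF _ assms(2)])
  fix g assume "g \<in> generated_algebra B"
  then show "\<exists>g'\<in>generated_algebra B. \<forall>e\<in>Iset. (g has_real_derivative g' e) (at e within Iset)"
  proof induction
    case (base f)
    then show ?case using assms(1) by blast
  next
    case (const c)
    show ?case by (intro bexI[of _ "\<lambda>_. 0"]) (auto intro: generated_algebra.const)
  next
    case (add f g)
    then obtain f' g' where "f' \<in> generated_algebra B" "g' \<in> generated_algebra B"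
      "\<forall>e\<in>Iset. (f has_real_derivative f' e) (at e within Iset)"
      "\<forall>e\<in>Iset. (g has_real_derivative g' e) (at e within Iset)" by blast
    then show ?case
      by (intro bexI[of _ "\<lambda>e. f' e + g' e"]) (auto intro: generated_algebra.add derivative_intros)
  next
    case (mult f g)
    then obtain f' g' where "f' \<in> generated_algebra B" "g' \<in> generated_algebra B"
      "\<forall>e\<in>Iset. (f has_real_derivative f' e) (at e within Iset)"
      "\<forall>e\<in>Iset. (g has_real_derivative g' e) (at e within Iset)" by blast
    then show ?case
      by (intro bexI[of _ "\<lambda>e. f e * g' e + f' e * g e"])
        (auto intro!: generated_algebra.add generated_algebra.mult mult.hyps DERIV_mult')
  qed
qed

lemma smooth_net_generated_algebra_of_smooth:
  "h \<in> generated_algebra {f. smooth_net f} \<Longrightarrow> smooth_net h"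
  by (rule smooth_net_generated_algebra[of "{f. smooth_net f}"])
    (use smooth_net_has_smooth_derivative generated_algebra.base in blast)

lemma smooth_net_add: "smooth_net f \<Longrightarrow> smooth_net g \<Longrightarrow> smooth_net (\<lambda>e. f e + g e)"
  by (rule smooth_net_generated_algebra_of_smooth) (auto intro: generated_algebra.intros)

lemma smooth_net_mult: "smooth_net f \<Longrightarrow> smooth_net g \<Longrightarrow> smooth_net (\<lambda>e. f e * g e)"
  by (rule smooth_net_generated_algebra_of_smooth) (auto intro: generated_algebra.intros)

lemma smooth_net_const: "smooth_net (\<lambda>_. c)"
  by (rule smooth_net_generated_algebra_of_smooth) (auto intro: generated_algebra.intros)

lemma smooth_net_diff: "smooth_net f \<Longrightarrow> smooth_net g \<Longrightarrow> smooth_net (\<lambda>e. f e - g e)"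
  using smooth_net_add[of f "\<lambda>e. (-1) * g e"] smooth_net_mult[OF smooth_net_const, of g "-1"]
  by simp

lemma smooth_net_ident: "smooth_net (\<lambda>e. e)"
  by (rule smooth_net_generated_algebra[of "{\<lambda>e. e}"])
    (auto intro!: bexI[of _ "\<lambda>_. 1"] generated_algebra.intros derivative_eq_intros)

lemma smooth_net_compose:
  assumes f: "smooth_net f" and U: "\<And>e. e \<in> Iset \<Longrightarrow> f e \<in> U"
    and \<phi>: "\<And>j u. u \<in> U \<Longrightarrow> (\<phi> j has_real_derivative \<phi> (Suc j) u) (at u)"
  shows "smooth_net (\<lambda>e. \<phi> 0 (f e))"
proof (rule smooth_net_generated_algebra[of "{f. smooth_net f} \<union> range (\<lambda>j e. \<phi> j (f e))"])
  let ?B = "{f. smooth_net f} \<union> range (\<lambda>j e. \<phi> j (f e))"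
  fix g assume "g \<in> ?B"
  then show "\<exists>g'\<in>generated_algebra ?B. \<forall>e\<in>Iset. (g has_real_derivative g' e) (at e within Iset)"
  proof
    assume "g \<in> {f. smooth_net f}"
    then show ?thesis
      using smooth_net_has_smooth_derivative[of g] by (auto intro: generated_algebra.base)
  next
    assume "g \<in> range (\<lambda>j e. \<phi> j (f e))"
    then obtain j where g: "g = (\<lambda>e. \<phi> j (f e))" by auto
    obtain f' where f': "smooth_net f'" "\<forall>e\<in>Iset. (f has_real_derivative f' e) (at e within Iset)"
      using smooth_net_has_smooth_derivative[OF f] by blast
    have mem: "(\<lambda>e. \<phi> (Suc j) (f e) * f' e) \<in> generated_algebra ?B"
      using f' by (intro generated_algebra.mult generated_algebra.base) auto
    have deriv: "((\<lambda>e. \<phi> j (f e)) has_real_derivative \<phi> (Suc j) (f e) * f' e) (at e within Iset)"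
      if "e \<in> Iset" for e
      using DERIV_chain2[of "\<phi> j" "\<phi> (Suc j) (f e)" f e "f' e" Iset] \<phi>[OF U[OF that]] f'(2) that
      by blast
    show ?thesis
      unfolding g by (intro bexI[OF _ mem] ballI deriv)
  qed
qed (auto intro: generated_algebra.base)

lemma smooth_net_powr:
  assumes "smooth_net f" and "\<And>e. e \<in> Iset \<Longrightarrow> 0 < f e"
  shows "smooth_net (\<lambda>e. f e powr a)"
proof -
  define \<phi> where "\<phi> j x = (\<Prod>i<j. (a - real i)) * x powr (a - real j)" for j x
  have \<phi>_deriv: "(\<phi> j has_real_derivative \<phi> (Suc j) u) (at u)" if "u \<in> {0<..}" for j u
  proof -
    have "((\<lambda>x. (\<Prod>i<j. (a - real i)) * x powr (a - real j)) has_real_derivative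
        (\<Prod>i<j. (a - real i)) * ((a - real j) * u powr (a - real j - 1))) (at u)"
      using that by (intro DERIV_cmult has_real_derivative_powr) auto
    then show ?thesis
      unfolding \<phi>_def by (simp add: algebra_simps diff_diff_eq)
  qed
  have "smooth_net (\<lambda>e. \<phi> 0 (f e))"
    by (rule smooth_net_compose[of f "{0<..}" \<phi>, OF assms(1) _ \<phi>_deriv]) (use assms(2) in auto)
  then show ?thesis by (simp add: \<phi>_def)
qed

lemma smooth_net_sqrt:
  assumes "smooth_net f" and "\<And>e. e \<in> Iset \<Longrightarrow> 0 < f e"
  shows "smooth_net (\<lambda>e. sqrt (f e))"
proof (rule smooth_net_cong[OF smooth_net_powr[OF assms, of "1/2"]])
  fix e assume "e \<in> Iset"
  then have "0 < f e" by (rule assms(2))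
  then show "f e powr (1/2) = sqrt (f e)" by (simp add: powr_half_sqrt)
qed

lemma smooth_net_inverse:
  assumes "smooth_net f" and "\<And>e. e \<in> Iset \<Longrightarrow> 0 < f e"
  shows "smooth_net (\<lambda>e. 1 / f e)"
proof (rule smooth_net_cong[OF smooth_net_powr[OF assms, of "-1"]])
  fix e assume "e \<in> Iset"
  then have "0 < f e" by (rule assms(2))
  then show "f e powr (-1) = 1 / f e" by (simp add: powr_neg_one)
qed

lemma smooth_net_imp_continuous_on:
  assumes "smooth_net f"
  shows "continuous_on Iset f"
proof -
  obtain D where D0: "\<forall>e\<in>Iset. D 0 e = f e"
    and DS: "\<forall>n. \<forall>e\<in>Iset. (D n has_real_derivative D (Suc n) e) (at e within Iset)"
    using assms unfolding smooth_net_def by blast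
  have "continuous_on Iset (D 0)"
    unfolding continuous_on_eq_continuous_within using DS by (auto intro: DERIV_continuous)
  then show ?thesis
    using continuous_on_cong[of Iset Iset "D 0" f] D0 by auto
qed

definition flat_exp :: "real \<Rightarrow> real" where
  "flat_exp e = exp (- 1 / e)"

lemma flat_exp_pos: "0 < flat_exp e"
  by (simp add: flat_exp_def)

lemma smooth_net_flat_exp: "smooth_net flat_exp"
proof -
  have "smooth_net (\<lambda>e. (-1) * (e powr (-1)))"
    by (intro smooth_net_mult smooth_net_const smooth_net_powr smooth_net_ident) (auto simp: Iset_def)
  then have "smooth_net (\<lambda>e. exp ((-1) * (e powr (-1))))"
    by (rule smooth_net_compose[where \<phi> = "\<lambda>_. exp" and U = UNIV]) auto
  then show ?thesis
    by (rule smooth_net_cong) (auto simp: flat_exp_def Iset_def powr_neg_one)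
qed

lemma negligible_flat_exp: "negligible flat_exp"
  unfolding negligible_def
proof
  fix m :: nat
  have "\<bar>flat_exp e\<bar> \<le> real m ^ m * e ^ m" if "0 < e" for e
  proof (cases "m = 0")
    case True
    then show ?thesis using that by (simp add: flat_exp_def)
  next
    case False
    have "1 / (real m * e) \<le> exp (1 / (real m * e))"
      using exp_ge_add_one_self[of "1 / (real m * e)"] by linarith
    then have "(1 / (real m * e)) ^ m \<le> exp (1 / (real m * e)) ^ m"
      by (rule power_mono) (use that in auto)
    also have "\<dots> = exp (1 / e)"
      using exp_of_nat_mult[of m "1 / (real m * e)"] False by simp
    finally have "1 \<le> exp (1 / e) * (real m * e) ^ m"
      using that False by (simp add: power_divide field_simps)
    then have "exp (- 1 / e) \<le> exp (- 1 / e) * (exp (1 / e) * (real m * e) ^ m)"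
      by (simp add: mult_le_cancel_left1)
    also have "\<dots> = (real m * e) ^ m"
      by (simp add: exp_minus[symmetric] exp_add[symmetric])
    finally show ?thesis by (simp add: flat_exp_def power_mult_distrib)
  qed
  then show "\<exists>C \<eta>. 0 < \<eta> \<and> (\<forall>e. 0 < e \<and> e < \<eta> \<and> e \<le> 1 \<longrightarrow> \<bar>flat_exp e\<bar> \<le> C * e ^ m)"
    by (intro exI[of _ "real m ^ m"] exI[of _ 1]) simp
qed

lemma EM_sm_subset_EM_co: "EM_sm \<subseteq> EM_co"
  by (auto simp: EM_sm_def EM_co_def smooth_net_imp_continuous_on)

lemma negligible_diff_commute: "negligible (\<lambda>e. f e - g e) \<Longrightarrow> negligible (\<lambda>e. g e - f e)"
  using negligible_cmult[of "\<lambda>e. f e - g e" "-1"] by simp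

lemma negligible_diff_trans:
  "negligible (\<lambda>e. f e - g e) \<Longrightarrow> negligible (\<lambda>e. g e - h e) \<Longrightarrow> negligible (\<lambda>e. f e - h e)"
  using negligible_add[of "\<lambda>e. f e - g e" "\<lambda>e. g e - h e"] by simp

lemma cls_sm_self: "f \<in> EM_sm \<Longrightarrow> f \<in> cls_sm f"
  by (simp add: cls_sm_def negligible_zero)

lemma cls_co_self: "f \<in> EM_co \<Longrightarrow> f \<in> cls_co f"
  by (simp add: cls_co_def negligible_zero)

lemma cls_sm_eqI: "negligible (\<lambda>e. f e - g e) \<Longrightarrow> cls_sm f = cls_sm g"
  unfolding cls_sm_def using negligible_diff_trans negligible_diff_commute by blast

lemma cls_co_eqI: "negligible (\<lambda>e. f e - g e) \<Longrightarrow> cls_co f = cls_co g"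
  unfolding cls_co_def using negligible_diff_trans negligible_diff_commute by blast

lemma cls_sm_in_Rsm: "f \<in> EM_sm \<Longrightarrow> cls_sm f \<in> Rsm"
  by (simp add: Rsm_def)

lemma rep_in:
  assumes "X \<in> Rsm"
  shows "rep X \<in> X"
proof -
  obtain f where "f \<in> EM_sm" "X = cls_sm f"
    using assms by (auto simp: Rsm_def)
  then have "f \<in> X" using cls_sm_self by simp
  then show ?thesis unfolding rep_def by (rule someI[of "\<lambda>r. r \<in> X"])
qed

lemma rep_in_EM_sm: "X \<in> Rsm \<Longrightarrow> rep X \<in> EM_sm"
  using rep_in by (auto simp: Rsm_def cls_sm_def)

lemma Rsm_eq_cls_sm_rep:
  assumes "X \<in> Rsm"
  shows "X = cls_sm (rep X)"
proof -
  obtain f where f: "f \<in> EM_sm" "X = cls_sm f"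
    using assms by (auto simp: Rsm_def)
  then have "negligible (\<lambda>e. f e - rep X e)"
    using rep_in[OF assms] by (simp add: cls_sm_def)
  with f show ?thesis using cls_sm_eqI by blast
qed

lemma negligible_diff_rep_cls_sm: "f \<in> EM_sm \<Longrightarrow> negligible (\<lambda>e. f e - rep (cls_sm f) e)"
  using rep_in[OF cls_sm_in_Rsm] by (simp add: cls_sm_def)

lemma tau_sm_inj:
  assumes "X \<in> Rsm" and "Y \<in> Rsm" and "tau_sm X = tau_sm Y"
  shows "X = Y"
proof -
  have "rep X \<in> cls_co (rep Y)"
    using assms cls_co_self EM_sm_subset_EM_co rep_in_EM_sm by (auto simp: tau_sm_def)
  then have "cls_sm (rep Y) = cls_sm (rep X)"
    by (intro cls_sm_eqI) (simp add: cls_co_def)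
  with assms(1,2) show ?thesis
    using Rsm_eq_cls_sm_rep by simp
qed

text \<open>\<open>abs_sm\<close> needs a smooth representative of \<open>[|a|]\<close>; adding the flat function
  \<open>exp (-1/\<epsilon>)\<close> under the square root keeps it positive, hence \<open>\<surd>\<close> smooth.\<close>

definition reg_abs :: "(real \<Rightarrow> real) \<Rightarrow> real \<Rightarrow> real" where
  "reg_abs a e = sqrt ((a e)\<^sup>2 + flat_exp e)"

lemma abs_le_reg_abs: "\<bar>a e\<bar> \<le> reg_abs a e"
  unfolding reg_abs_def using flat_exp_pos[of e] by (intro real_le_rsqrt) simp

lemma reg_abs_le_abs_add: "reg_abs a e \<le> \<bar>a e\<bar> + sqrt (flat_exp e)"
proof -
  have "(a e)\<^sup>2 + flat_exp e \<le> (\<bar>a e\<bar> + sqrt (flat_exp e))\<^sup>2"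
    using flat_exp_pos[of e] by (simp add: power2_eq_square algebra_simps)
  then have "reg_abs a e \<le> sqrt ((\<bar>a e\<bar> + sqrt (flat_exp e))\<^sup>2)"
    unfolding reg_abs_def by (rule real_sqrt_le_mono)
  then show ?thesis
    using flat_exp_pos[of e] by simp
qed

lemma negligible_reg_abs_diff_abs: "negligible (\<lambda>e. reg_abs a e - \<bar>a e\<bar>)"
proof (rule negligible_dominated[OF negligible_sqrt_abs[OF negligible_flat_exp]])
  fix e
  show "\<bar>reg_abs a e - \<bar>a e\<bar>\<bar> \<le> \<bar>sqrt \<bar>flat_exp e\<bar>\<bar>"
    using abs_le_reg_abs[of a e] reg_abs_le_abs_add[of a e] flat_exp_pos[of e] by simp
qed

lemma reg_abs_in_EM_sm:
  assumes "a \<in> EM_sm"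
  shows "reg_abs a \<in> EM_sm"
proof -
  have smooth: "smooth_net (reg_abs a)"
    unfolding reg_abs_def[abs_def] power2_eq_square using assms
    by (intro smooth_net_sqrt smooth_net_add smooth_net_mult smooth_net_flat_exp)
      (auto simp: EM_sm_def add_nonneg_pos flat_exp_pos)
  have "moderate a"
    using assms by (simp add: EM_sm_def)
  then have "moderate (\<lambda>e. \<bar>a e\<bar>)"
    by (rule moderate_dominated) simp
  moreover have "moderate (\<lambda>e. sqrt \<bar>flat_exp e\<bar>)"
    by (intro negligible_imp_moderate negligible_sqrt_abs negligible_flat_exp)
  ultimately have "moderate (\<lambda>e. \<bar>a e\<bar> + sqrt \<bar>flat_exp e\<bar>)"
    by (rule moderate_add)
  then have "moderate (reg_abs a)"
  proof (rule moderate_dominated)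
    fix e
    show "\<bar>reg_abs a e\<bar> \<le> \<bar>\<bar>a e\<bar> + sqrt \<bar>flat_exp e\<bar>\<bar>"
      using abs_le_reg_abs[of a e] reg_abs_le_abs_add[of a e] flat_exp_pos[of e] by simp
  qed
  with smooth show ?thesis by (simp add: EM_sm_def)
qed

lemma abs_sm_eq_cls_sm_reg_abs:
  assumes "X \<in> Rsm"
  shows "abs_sm X = cls_sm (reg_abs (rep X))"
proof -
  let ?Y = "cls_sm (reg_abs (rep X))"
  have Y: "?Y \<in> Rsm"
    using assms by (intro cls_sm_in_Rsm reg_abs_in_EM_sm rep_in_EM_sm)
  have "negligible (\<lambda>e. rep ?Y e - \<bar>rep X e\<bar>)"
    using negligible_diff_rep_cls_sm[OF reg_abs_in_EM_sm[OF rep_in_EM_sm[OF assms]]]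
    by (intro negligible_diff_trans[OF negligible_diff_commute negligible_reg_abs_diff_abs])
  then have "tau_sm ?Y = cls_co (\<lambda>e. \<bar>rep X e\<bar>)"
    unfolding tau_sm_def by (rule cls_co_eqI)
  with Y show ?thesis
    unfolding abs_sm_def using tau_sm_inj by (intro the_equality) auto
qed

text \<open>Here \<open>z a - b = - b t\<^sup>2 / (a\<^sup>2 + t\<^sup>2)\<close>; both estimates come from
  \<open>2 |a| t \<le> a\<^sup>2 + t\<^sup>2\<close>.\<close>

lemma quotient_bounds_if_abs_le_add:
  fixes a b t :: real
  assumes "0 < t" and "\<bar>b\<bar> \<le> \<bar>a\<bar> + t"
  shows "\<bar>b * a * (1 / (a * a + t * t))\<bar> \<le> 3 / 2"
    and "\<bar>b * a * (1 / (a * a + t * t)) * a - b\<bar> \<le> 3 / 2 * t"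
proof -
  define D where "D = a * a + t * t"
  have D: "0 < D"
    unfolding D_def using assms(1) by (simp add: add_nonneg_pos)
  have amgm: "2 * (\<bar>a\<bar> * t) \<le> D"
    using sum_squares_bound[of "\<bar>a\<bar>" t] by (simp add: D_def power2_eq_square mult.assoc)
  have "\<bar>b\<bar> * \<bar>a\<bar> \<le> (\<bar>a\<bar> + t) * \<bar>a\<bar>"
    using assms(2) by (rule mult_right_mono) simp
  also have "\<dots> = a * a + \<bar>a\<bar> * t"
    by (simp add: algebra_simps abs_mult_self_eq)
  also have "\<dots> \<le> 3 / 2 * D"
    using amgm zero_le_square[of t] unfolding D_def distrib_left by linarith
  finally show "\<bar>b * a * (1 / (a * a + t * t))\<bar> \<le> 3 / 2"
    using D by (simp add: D_def[symmetric] abs_mult divide_le_eq)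
  have "\<bar>b\<bar> * (t * t) \<le> (\<bar>a\<bar> + t) * (t * t)"
    using assms(2) by (rule mult_right_mono) simp
  also have "\<dots> = t * (\<bar>a\<bar> * t + t * t)"
    by (simp add: algebra_simps)
  also have "\<dots> \<le> t * (3 / 2 * D)"
  proof (rule mult_left_mono)
    show "\<bar>a\<bar> * t + t * t \<le> 3 / 2 * D"
      using amgm zero_le_square[of a] unfolding D_def distrib_left by linarith
  qed (use assms(1) in simp)
  finally have "\<bar>b\<bar> * (t * t) \<le> 3 / 2 * t * D"
    by simp
  moreover have "b * a * (1 / D) * a - b = - (b * (t * t) / D)"
  proof -
    have "b * a * (1 / D) * a - b = (b * (a * a) - b * D) / D"
      using D by (simp add: field_simps)
    also have "\<dots> = - (b * (t * t) / D)"
      by (simp add: D_def algebra_simps)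
    finally show ?thesis .
  qed
  ultimately show "\<bar>b * a * (1 / (a * a + t * t)) * a - b\<bar> \<le> 3 / 2 * t"
    using D assms(1) by (simp add: D_def[symmetric] abs_mult divide_le_eq)
qed

lemma EM_sm_factor_if_abs_le_add_negligible:
  assumes "a \<in> EM_sm" and "b \<in> EM_sm"
    and "smooth_net t" and "\<And>e. e \<in> Iset \<Longrightarrow> 0 < t e" and "negligible t"
    and "\<And>e. e \<in> Iset \<Longrightarrow> \<bar>b e\<bar> \<le> \<bar>a e\<bar> + t e"
  shows "\<exists>z\<in>EM_sm. negligible (\<lambda>e. z e * a e - b e)"
proof
  define z where "z e = b e * a e * (1 / (a e * a e + t e * t e))" for e
  note bounds = quotient_bounds_if_abs_le_add[OF assms(4) assms(6), folded z_def]
  have "smooth_net z"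
    unfolding z_def[abs_def] using assms(1-4)
    by (intro smooth_net_mult smooth_net_inverse smooth_net_add)
      (auto simp: EM_sm_def add_nonneg_pos)
  moreover have "moderate z"
    by (rule moderate_dominated[OF moderate_const[of "3 / 2"]]) (use bounds(1) in simp)
  ultimately show "z \<in> EM_sm"
    by (simp add: EM_sm_def)
  have "negligible (\<lambda>e. 3 / 2 * t e)"
    by (rule negligible_cmult[OF assms(5)])
  then show "negligible (\<lambda>e. z e * a e - b e)"
    by (rule negligible_dominated) (use bounds(2) assms(4) in force)
qed

text \<open>For representatives \<open>r \<le> s\<close> of \<open>|y|\<close> and \<open>|x|\<close>, the three error terms in
  \<open>|b| \<le> reg_abs b \<le> s + (reg_abs b - r) \<le> |a| + \<surd>flat_exp + (reg_abs a - s) + (reg_abs b - r)\<close>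
  are each at most \<open>\<surd>w\<close>, with \<open>w\<close> the sum of their squares.\<close>

lemma abs_rep_le_add_negligible_if_le_abs_sm:
  assumes "x \<in> Rsm" and "y \<in> Rsm" and "le_sm (abs_sm y) (abs_sm x)"
  obtains t where "smooth_net t" "\<And>e. e \<in> Iset \<Longrightarrow> 0 < t e" "negligible t"
    "\<And>e. e \<in> Iset \<Longrightarrow> \<bar>rep y e\<bar> \<le> \<bar>rep x e\<bar> + t e"
proof -
  define a b where "a = rep x" and "b = rep y"
  have a: "a \<in> EM_sm" and b: "b \<in> EM_sm"
    using assms(1,2) by (simp_all add: a_def b_def rep_in_EM_sm)
  obtain r s where r: "r \<in> cls_sm (reg_abs b)" and s: "s \<in> cls_sm (reg_abs a)"
    and rs: "\<And>e. e \<in> Iset \<Longrightarrow> r e \<le> s e"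
    using assms(3) unfolding le_sm_def a_def b_def
      abs_sm_eq_cls_sm_reg_abs[OF assms(1)] abs_sm_eq_cls_sm_reg_abs[OF assms(2)] by blast
  define u v where "u e = reg_abs b e - r e" and "v e = reg_abs a e - s e" for e
  define w where "w e = u e * u e + v e * v e + flat_exp e" for e
  have w_pos: "0 < w e" for e
    unfolding w_def using flat_exp_pos[of e] by (simp add: add_nonneg_pos)
  have "negligible u" "negligible v"
    using r s by (simp_all add: u_def[abs_def] v_def[abs_def] cls_sm_def)
  then have "negligible w"
    unfolding w_def[abs_def]
    by (intro negligible_add negligible_mult_moderate negligible_imp_moderate negligible_flat_exp)
  then have "negligible (\<lambda>e. 3 * sqrt (w e))"
    using negligible_cmult[OF negligible_sqrt_abs, of w 3] w_pos by (simp add: abs_of_pos)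
  moreover have "smooth_net (\<lambda>e. 3 * sqrt (w e))"
    using r s a b w_pos reg_abs_in_EM_sm[OF a] reg_abs_in_EM_sm[OF b]
    unfolding w_def[abs_def] u_def[abs_def] v_def[abs_def]
    by (intro smooth_net_mult smooth_net_const smooth_net_sqrt smooth_net_add smooth_net_diff
        smooth_net_flat_exp) (auto simp: cls_sm_def EM_sm_def)
  moreover have "\<bar>b e\<bar> \<le> \<bar>a e\<bar> + 3 * sqrt (w e)" if "e \<in> Iset" for e
  proof -
    have "\<bar>u e\<bar> \<le> sqrt (w e)" "\<bar>v e\<bar> \<le> sqrt (w e)" "sqrt (flat_exp e) \<le> sqrt (w e)"
      unfolding w_def using flat_exp_pos[of e]
      by (auto intro!: real_le_rsqrt simp: power2_eq_square)
    then show ?thesis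
      using abs_le_reg_abs[of b e] reg_abs_le_abs_add[of a e] rs[OF that]
      unfolding u_def v_def by linarith
  qed
  ultimately show ?thesis
    using that[of "\<lambda>e. 3 * sqrt (w e)"] w_pos by (simp add: a_def b_def)
qed

lemma Rsm_left_multiple_if_le_abs_sm:
  assumes "x \<in> Rsm" and "y \<in> Rsm" and "le_sm (abs_sm y) (abs_sm x)"
  shows "\<exists>Z\<in>Rsm. y = Z \<otimes>\<^bsub>Rsm_ring\<^esub> x"
proof -
  define a b where "a = rep x" and "b = rep y"
  have a: "a \<in> EM_sm" and b: "b \<in> EM_sm"
    using assms(1,2) by (simp_all add: a_def b_def rep_in_EM_sm)
  obtain t where "smooth_net t" "\<And>e. e \<in> Iset \<Longrightarrow> 0 < t e" "negligible t"
    "\<And>e. e \<in> Iset \<Longrightarrow> \<bar>b e\<bar> \<le> \<bar>a e\<bar> + t e"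
    using abs_rep_le_add_negligible_if_le_abs_sm[OF assms] unfolding a_def b_def by blast
  then obtain z where z: "z \<in> EM_sm" and za: "negligible (\<lambda>e. z e * a e - b e)"
    using EM_sm_factor_if_abs_le_add_negligible[OF a b] by blast
  have "negligible (\<lambda>e. a e * (rep (cls_sm z) e - z e))"
    using a negligible_diff_commute[OF negligible_diff_rep_cls_sm[OF z]]
    by (intro negligible_mult_moderate) (simp_all add: EM_sm_def)
  from negligible_add[OF this za] have "negligible (\<lambda>e. rep (cls_sm z) e * a e - b e)"
    by (simp add: algebra_simps)
  then have "cls_sm z \<otimes>\<^bsub>Rsm_ring\<^esub> x = y"
    using Rsm_eq_cls_sm_rep[OF assms(2)] by (simp add: Rsm_ring_def cls_sm_eqI a_def b_def)
  with cls_sm_in_Rsm[OF z] show ?thesis by blast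
qed

theorem proposition4p25:
  assumes "ideal J Rsm_ring"
    and "x \<in> J"
    and "y \<in> Rsm"
    and "le_sm (abs_sm y) (abs_sm x)"
  shows "y \<in> J"
proof -
  have "x \<in> Rsm"
    using ideal.Icarr[OF assms(1,2)] by (simp add: Rsm_ring_def)
  then obtain Z where "Z \<in> Rsm" and "y = Z \<otimes>\<^bsub>Rsm_ring\<^esub> x"
    using Rsm_left_multiple_if_le_abs_sm assms(3,4) by blast
  then show ?thesis
    using ideal.I_l_closed[OF assms(1,2)] by (simp add: Rsm_ring_def)
qed

end
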